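(* Let $X$ be a topological space. The bounded continuous valuations $\nu$ on $X$ that take only finitely many values are exactly the finite linear combinations $\sum_{i=1}^n a_i\, e_{C_i}$, where each $C_i$ is an irreducible closed subset of $X$ and each $a_i\in(0,\infty)$.
   Context: A valuation on $X$ is a map $\nu:\mathcal OX\to[0,\infty]$ with $\nu(\emptyset)=0$, monotone and modular; continuous if it preserves directed suprema of opens; bounded if $\nu(X)<\infty$. A non-empty subset $A$ is irreducible if $A\subseteq B\cup C$ with $B,C$ closed implies $A\subseteq B$ or $A\subseteq C$. For an irreducible closed $C$, $e_C:\mathcal OX\to[0,\infty]$ maps $U$ to $1$ if $U\cap C\neq\emptyset$ and to $0$ otherwise. (The empty sum, $n=0$, is the zero valuation.) *)

theory Defs
  imports "HOL-Analysis.Analysis" "HOL-Library.Extended_Nonnegative_Real"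
begin

text \<open>A valuation on the space X: a map from open sets to [0,\<infinity>] (ennreal);
  only its values on open sets of X matter.\<close>
definition valuation :: "'a topology \<Rightarrow> ('a set \<Rightarrow> ennreal) \<Rightarrow> bool" where
  "valuation X \<nu> \<longleftrightarrow>
     \<nu> {} = 0 \<and>
     (\<forall>U V. openin X U \<and> openin X V \<and> U \<subseteq> V \<longrightarrow> \<nu> U \<le> \<nu> V) \<and>
     (\<forall>U V. openin X U \<and> openin X V \<longrightarrow> \<nu> U + \<nu> V = \<nu> (U \<union> V) + \<nu> (U \<inter> V))"

definition directed_opens :: "'a topology \<Rightarrow> 'a set set \<Rightarrow> bool" where
  "directed_opens X D \<longleftrightarrow> D \<noteq> {} \<and> (\<forall>U\<in>D. openin X U) \<and>
     (\<forall>U\<in>D. \<forall>V\<in>D. \<exists>W\<in>D. U \<subseteq> W \<and> V \<subseteq> W)"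

definition continuous_valuation :: "'a topology \<Rightarrow> ('a set \<Rightarrow> ennreal) \<Rightarrow> bool" where
  "continuous_valuation X \<nu> \<longleftrightarrow> valuation X \<nu> \<and>
     (\<forall>D. directed_opens X D \<longrightarrow> \<nu> (\<Union>D) = (SUP U\<in>D. \<nu> U))"

definition bounded_valuation :: "'a topology \<Rightarrow> ('a set \<Rightarrow> ennreal) \<Rightarrow> bool" where
  "bounded_valuation X \<nu> \<longleftrightarrow> \<nu> (topspace X) < \<infinity>"

definition irreducible_in :: "'a topology \<Rightarrow> 'a set \<Rightarrow> bool" where
  "irreducible_in X A \<longleftrightarrow> A \<noteq> {} \<and> A \<subseteq> topspace X \<and>
     (\<forall>B C. closedin X B \<and> closedin X C \<and> A \<subseteq> B \<union> C \<longrightarrow> A \<subseteq> B \<or> A \<subseteq> C)"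

definition point_val :: "'a set \<Rightarrow> 'a set \<Rightarrow> ennreal" where
  "point_val C U = (if U \<inter> C \<noteq> {} then 1 else 0)"

end

theory Submission
  imports Defs
begin

(* A bounded continuous valuation \<nu> with finitely many values is real-valued. Let c be its
   least positive value, attained at U. The opens W with \<nu>(W \<inter> U) = 0 form a directed
   family, so they have a largest member N, and with C the complement of N minimality of c
   gives \<nu>(W \<inter> U) = c e_C(W) for every open W; modularity of this function forces C to be
   irreducible. Then \<nu> - c e_C is again such a valuation, and each of its values is a nonzero
   value of \<nu> minus c, so it has fewer values: induction on the number of values yields the
   decomposition. Conversely, e_C is modular because two opens meeting an irreducible C meet
   it jointly, and continuous because finitely many members of a directed family have an
   upper bound in it. *)

lemma irreducible_in_iff_opens_meet:
  "irreducible_in X C \<longleftrightarrow> C \<noteq> {} \<and> C \<subseteq> topspace X \<and>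
     (\<forall>U V. openin X U \<and> openin X V \<and> U \<inter> C \<noteq> {} \<and> V \<inter> C \<noteq> {} \<longrightarrow> U \<inter> V \<inter> C \<noteq> {})"
proof -
  have "(\<forall>B B'. closedin X B \<and> closedin X B' \<and> C \<subseteq> B \<union> B' \<longrightarrow> C \<subseteq> B \<or> C \<subseteq> B') \<longleftrightarrow>
        (\<forall>U V. openin X U \<and> openin X V \<and> U \<inter> C \<noteq> {} \<and> V \<inter> C \<noteq> {} \<longrightarrow> U \<inter> V \<inter> C \<noteq> {})"
    if "C \<subseteq> topspace X"
  proof (intro iffI allI impI notI)
    fix U V assume irr: "\<forall>B B'. closedin X B \<and> closedin X B' \<and> C \<subseteq> B \<union> B' \<longrightarrow> C \<subseteq> B \<or> C \<subseteq> B'"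
      and UV: "openin X U \<and> openin X V \<and> U \<inter> C \<noteq> {} \<and> V \<inter> C \<noteq> {}"
      and "U \<inter> V \<inter> C = {}"
    then have "C \<subseteq> (topspace X - U) \<union> (topspace X - V)"
      using that by blast
    moreover have "closedin X (topspace X - U)" "closedin X (topspace X - V)"
      using UV by auto
    ultimately have "C \<subseteq> topspace X - U \<or> C \<subseteq> topspace X - V"
      using irr by simp
    then show False
      using UV by blast
  next
    fix B B' assume meet: "\<forall>U V. openin X U \<and> openin X V \<and> U \<inter> C \<noteq> {} \<and> V \<inter> C \<noteq> {} \<longrightarrow> U \<inter> V \<inter> C \<noteq> {}"
      and BB': "closedin X B \<and> closedin X B' \<and> C \<subseteq> B \<union> B'"
    have "openin X (topspace X - B)" "openin X (topspace X - B')"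
      using BB' by auto
    moreover have "(topspace X - B) \<inter> (topspace X - B') \<inter> C = {}"
      using BB' by blast
    ultimately have "(topspace X - B) \<inter> C = {} \<or> (topspace X - B') \<inter> C = {}"
      using meet by blast
    then show "C \<subseteq> B \<or> C \<subseteq> B'"
      using that by blast
  qed
  then show ?thesis
    unfolding irreducible_in_def by blast
qed

lemma of_bool_meets_modular:
  assumes "irreducible_in X C" "openin X U" "openin X V"
  shows "(of_bool (U \<inter> C \<noteq> {}) :: 'b::semiring_1) + of_bool (V \<inter> C \<noteq> {})
       = of_bool ((U \<union> V) \<inter> C \<noteq> {}) + of_bool (U \<inter> V \<inter> C \<noteq> {})"
proof -
  have "U \<inter> V \<inter> C \<noteq> {}" if "U \<inter> C \<noteq> {}" "V \<inter> C \<noteq> {}"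
    using assms that unfolding irreducible_in_iff_opens_meet by blast
  then show ?thesis
    by (cases "U \<inter> C = {}"; cases "V \<inter> C = {}") (auto simp: Int_Un_distrib2)
qed

lemma point_val_eq_of_bool: "point_val C U = of_bool (U \<inter> C \<noteq> {})"
  unfolding point_val_def by simp

lemma point_val_mono: "U \<subseteq> V \<Longrightarrow> point_val C U \<le> point_val C V"
  unfolding point_val_def by auto

lemma directed_opensD:
  assumes "directed_opens X D"
  shows directed_opens_nonempty: "D \<noteq> {}"
    and directed_opens_openin: "V \<in> D \<Longrightarrow> openin X V"
    and directed_opens_upper: "U \<in> D \<Longrightarrow> V \<in> D \<Longrightarrow> \<exists>W\<in>D. U \<subseteq> W \<and> V \<subseteq> W"
  using assms unfolding directed_opens_def by simp_all

lemma directed_opens_Int: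
  assumes "directed_opens X D" "openin X U"
  shows "directed_opens X ((\<lambda>V. V \<inter> U) ` D)"
  unfolding directed_opens_def
proof (intro conjI ballI)
  show "(\<lambda>V. V \<inter> U) ` D \<noteq> {}"
    using directed_opens_nonempty[OF assms(1)] by simp
  show "openin X A" if "A \<in> (\<lambda>V. V \<inter> U) ` D" for A
    using that directed_opens_openin[OF assms(1)] assms(2) by auto
next
  fix A B assume "A \<in> (\<lambda>V. V \<inter> U) ` D" "B \<in> (\<lambda>V. V \<inter> U) ` D"
  then obtain V V' where "V \<in> D" "V' \<in> D" "A = V \<inter> U" "B = V' \<inter> U" by blast
  moreover from this obtain W where "W \<in> D" "V \<subseteq> W" "V' \<subseteq> W"
    using directed_opens_upper[OF assms(1)] by blast
  ultimately show "\<exists>W'\<in>(\<lambda>V. V \<inter> U) ` D. A \<subseteq> W' \<and> B \<subseteq> W'"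
    by (intro bexI[of _ "W \<inter> U"]) auto
qed

lemma directed_opens_upper_bound:
  assumes "directed_opens X D" "finite F" "F \<subseteq> D"
  shows "\<exists>W\<in>D. \<Union>F \<subseteq> W"
  using assms(2,3)
proof (induction F rule: finite_induct)
  case empty
  then show ?case
    using directed_opens_nonempty[OF assms(1)] by auto
next
  case (insert V F)
  then obtain W where "W \<in> D" "\<Union>F \<subseteq> W"
    by auto
  moreover obtain W' where "W' \<in> D" "V \<subseteq> W'" "W \<subseteq> W'"
    using directed_opens_upper[OF assms(1)] insert.prems \<open>W \<in> D\<close> by (meson insert_subset)
  ultimately show ?case by auto
qed

(* For a valuation with finitely many values, preserving directed suprema of opens is the same
   as attaining them. *)
locale finite_real_valuation =
  fixes X :: "'a topology" and \<mu> :: "'a set \<Rightarrow> real"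
  assumes empty_zero: "\<mu> {} = 0"
    and monotone: "openin X U \<Longrightarrow> openin X V \<Longrightarrow> U \<subseteq> V \<Longrightarrow> \<mu> U \<le> \<mu> V"
    and modular: "openin X U \<Longrightarrow> openin X V \<Longrightarrow> \<mu> U + \<mu> V = \<mu> (U \<union> V) + \<mu> (U \<inter> V)"
    and directed_attained: "directed_opens X D \<Longrightarrow> \<exists>W\<in>D. \<mu> (\<Union>D) = \<mu> W"
    and finite_values: "finite (\<mu> ` {U. openin X U})"
begin

lemma nonneg: "openin X U \<Longrightarrow> 0 \<le> \<mu> U"
  using monotone[of "{}" U] empty_zero by simp

lemma restrict:
  assumes "openin X U"
  shows "finite_real_valuation X (\<lambda>V. \<mu> (V \<inter> U))"
proof
  show "\<mu> ({} \<inter> U) = 0"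
    using empty_zero by simp
  show "\<mu> (V \<inter> U) \<le> \<mu> (W \<inter> U)" if "openin X V" "openin X W" "V \<subseteq> W" for V W
    using that assms by (intro monotone) auto
  show "\<mu> (V \<inter> U) + \<mu> (W \<inter> U) = \<mu> ((V \<union> W) \<inter> U) + \<mu> (V \<inter> W \<inter> U)"
    if "openin X V" "openin X W" for V W
  proof -
    have "(V \<inter> U) \<union> (W \<inter> U) = (V \<union> W) \<inter> U" "(V \<inter> U) \<inter> (W \<inter> U) = V \<inter> W \<inter> U"
      by blast+
    then show ?thesis
      using modular[of "V \<inter> U" "W \<inter> U"] that assms by auto
  qed
  show "\<exists>W\<in>D. \<mu> (\<Union>D \<inter> U) = \<mu> (W \<inter> U)" if D: "directed_opens X D" for D
  proof -
    obtain W where "W \<in> (\<lambda>V. V \<inter> U) ` D" "\<mu> (\<Union>((\<lambda>V. V \<inter> U) ` D)) = \<mu> W"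
      using directed_attained[OF directed_opens_Int[OF D assms]] by blast
    moreover have "\<Union>((\<lambda>V. V \<inter> U) ` D) = \<Union>D \<inter> U"
      by blast
    ultimately show ?thesis
      by auto
  qed
  have "(\<lambda>V. \<mu> (V \<inter> U)) ` {V. openin X V} \<subseteq> \<mu> ` {V. openin X V}"
    using assms by auto
  then show "finite ((\<lambda>V. \<mu> (V \<inter> U)) ` {V. openin X V})"
    using finite_values by (rule finite_subset)
qed

lemma null_Union_null_opens: "\<mu> (\<Union>{V. openin X V \<and> \<mu> V = 0}) = 0"
proof -
  let ?N = "{V. openin X V \<and> \<mu> V = 0}"
  have union: "V \<union> W \<in> ?N" if "V \<in> ?N" "W \<in> ?N" for V W
  proof -
    have "openin X V" "openin X W" "\<mu> V = 0" "\<mu> W = 0"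
      using that by auto
    then show ?thesis
      using modular[of V W] nonneg[of "V \<union> W"] nonneg[of "V \<inter> W"] by (auto simp: openin_Un openin_Int)
  qed
  have "directed_opens X ?N"
    unfolding directed_opens_def
  proof (intro conjI ballI)
    show "?N \<noteq> {}"
      using empty_zero by auto
    show "\<exists>U\<in>?N. V \<subseteq> U \<and> W \<subseteq> U" if "V \<in> ?N" "W \<in> ?N" for V W
      using union[OF that] by blast
  qed auto
  then obtain W where "W \<in> ?N" "\<mu> (\<Union>?N) = \<mu> W"
    using directed_attained by blast
  then show ?thesis
    by simp
qed

lemma min_positive_value:
  assumes "openin X U0" "\<mu> U0 \<noteq> 0"
  obtains U where "openin X U" "0 < \<mu> U" "\<And>W. openin X W \<Longrightarrow> 0 < \<mu> W \<Longrightarrow> \<mu> U \<le> \<mu> W"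
proof -
  define P where "P = {v \<in> \<mu> ` {U. openin X U}. 0 < v}"
  have "finite P"
    using finite_values unfolding P_def by auto
  moreover have "\<mu> U0 \<in> P"
    using assms nonneg[OF assms(1)] unfolding P_def by auto
  ultimately have "Min P \<in> P" and Min_le: "\<And>v. v \<in> P \<Longrightarrow> Min P \<le> v"
    by (auto intro: Min_in)
  then obtain U where "openin X U" "\<mu> U = Min P" "0 < \<mu> U"
    unfolding P_def by auto
  moreover have "Min P \<le> \<mu> W" if "openin X W" "0 < \<mu> W" for W
    using that by (intro Min_le) (auto simp: P_def)
  ultimately show thesis
    using that by simp
qed

lemma min_positive_summand:
  assumes U: "openin X U" "0 < \<mu> U" and min: "\<And>W. openin X W \<Longrightarrow> 0 < \<mu> W \<Longrightarrow> \<mu> U \<le> \<mu> W"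
  obtains C where "closedin X C" "\<And>W. openin X W \<Longrightarrow> \<mu> (W \<inter> U) = \<mu> U * of_bool (W \<inter> C \<noteq> {})"
proof -
  interpret U: finite_real_valuation X "\<lambda>V. \<mu> (V \<inter> U)"
    using restrict[OF U(1)] .
  define N where "N = \<Union>{V. openin X V \<and> \<mu> (V \<inter> U) = 0}"
  have "openin X N"
    unfolding N_def by auto
  have "\<mu> (N \<inter> U) = 0"
    using U.null_Union_null_opens unfolding N_def .
  have "\<mu> (W \<inter> U) = \<mu> U * of_bool (W \<inter> (topspace X - N) \<noteq> {})" if W: "openin X W" for W
  proof (cases "W \<subseteq> N")
    case True
    then have "\<mu> (W \<inter> U) \<le> \<mu> (N \<inter> U)"
      using U.monotone[OF W \<open>openin X N\<close>] by simp
    moreover have "W \<inter> (topspace X - N) = {}"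
      using True by blast
    ultimately show ?thesis
      using U.nonneg[OF W] \<open>\<mu> (N \<inter> U) = 0\<close> by simp
  next
    case False
    then have "\<mu> (W \<inter> U) \<noteq> 0"
      unfolding N_def using W by blast
    then have "\<mu> U \<le> \<mu> (W \<inter> U)"
      using min U.nonneg[OF W] W U(1) by (simp add: openin_Int)
    moreover have "\<mu> (W \<inter> U) \<le> \<mu> U"
      using monotone W U(1) by (simp add: openin_Int)
    moreover have "W \<inter> (topspace X - N) \<noteq> {}"
      using False openin_subset[OF W] by blast
    ultimately show ?thesis
      by simp
  qed
  moreover have "closedin X (topspace X - N)"
    using \<open>openin X N\<close> by auto
  ultimately show thesis
    using that by blast
qed

lemma irreducible_summand:
  assumes U: "openin X U" "0 < \<mu> U" and "C \<subseteq> topspace X"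
    and summand: "\<And>W. openin X W \<Longrightarrow> \<mu> (W \<inter> U) = \<mu> U * of_bool (W \<inter> C \<noteq> {})"
  shows "irreducible_in X C"
  unfolding irreducible_in_iff_opens_meet
proof (intro conjI allI impI notI)
  show "C = {} \<Longrightarrow> False"
    using summand[OF U(1)] U(2) by simp
  show "C \<subseteq> topspace X" by fact
next
  fix V W assume VW: "openin X V \<and> openin X W \<and> V \<inter> C \<noteq> {} \<and> W \<inter> C \<noteq> {}"
    and "V \<inter> W \<inter> C = {}"
  interpret U: finite_real_valuation X "\<lambda>V. \<mu> (V \<inter> U)"
    using restrict[OF U(1)] .
  have "\<mu> (V \<inter> U) + \<mu> (W \<inter> U) = \<mu> ((V \<union> W) \<inter> U) + \<mu> (V \<inter> W \<inter> U)"
    using U.modular VW by blast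
  moreover have "(V \<union> W) \<inter> C \<noteq> {}"
    using VW by blast
  ultimately have "\<mu> U + \<mu> U = \<mu> U + 0"
    using summand VW \<open>V \<inter> W \<inter> C = {}\<close> by (simp add: openin_Un openin_Int)
  then show False
    using U(2) by simp
qed

lemma directed_attained_diff_point_val:
  assumes D: "directed_opens X D"
  shows "\<exists>W\<in>D. \<mu> (\<Union>D) - c * of_bool (\<Union>D \<inter> C \<noteq> {}) = \<mu> W - c * of_bool (W \<inter> C \<noteq> {})"
proof -
  obtain W1 where "W1 \<in> D" "\<mu> (\<Union>D) = \<mu> W1"
    using directed_attained[OF D] by blast
  show ?thesis
  proof (cases "\<Union>D \<inter> C = {}")
    case True
    then have "W1 \<inter> C = {}"
      using \<open>W1 \<in> D\<close> by blast
    then show ?thesis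
      using True \<open>W1 \<in> D\<close> \<open>\<mu> (\<Union>D) = \<mu> W1\<close> by auto
  next
    case False
    then obtain W2 where "W2 \<in> D" "W2 \<inter> C \<noteq> {}"
      by blast
    then obtain W where W: "W \<in> D" "W1 \<subseteq> W" "W2 \<subseteq> W"
      using directed_opens_upper[OF D \<open>W1 \<in> D\<close>] by blast
    have "openin X W1" "openin X W" "openin X (\<Union>D)"
      using directed_opens_openin[OF D] \<open>W1 \<in> D\<close> W(1) by auto
    then have "\<mu> W = \<mu> (\<Union>D)"
      using monotone[of W1 W] monotone[of W "\<Union>D"] W \<open>\<mu> (\<Union>D) = \<mu> W1\<close> by fastforce
    moreover have "W \<inter> C \<noteq> {}"
      using W \<open>W2 \<inter> C \<noteq> {}\<close> by blast
    ultimately show ?thesis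
      using False by (intro bexI[OF _ W(1)]) simp
  qed
qed

lemma monotone_diff_summand:
  assumes U: "openin X U"
    and summand: "\<And>W. openin X W \<Longrightarrow> \<mu> (W \<inter> U) = c * of_bool (W \<inter> C \<noteq> {})"
    and V: "openin X V" and W: "openin X W" and "V \<subseteq> W"
  shows "\<mu> V - c * of_bool (V \<inter> C \<noteq> {}) \<le> \<mu> W - c * of_bool (W \<inter> C \<noteq> {})"
proof (cases "V \<inter> C = {} \<and> W \<inter> C \<noteq> {}")
  case True
  have "V \<inter> (W \<inter> U) = V \<inter> U"
    using \<open>V \<subseteq> W\<close> by blast
  then have "\<mu> V + \<mu> (W \<inter> U) = \<mu> (V \<union> (W \<inter> U)) + \<mu> (V \<inter> U)"
    using modular[of V "W \<inter> U"] V W U by (simp add: openin_Int)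
  moreover have "\<mu> (V \<union> (W \<inter> U)) \<le> \<mu> W"
    using monotone V W U \<open>V \<subseteq> W\<close> by (simp add: openin_Int openin_Un)
  moreover have "\<mu> (W \<inter> U) = c" "\<mu> (V \<inter> U) = 0"
    using summand[OF W] summand[OF V] True by simp_all
  ultimately show ?thesis
    using True by simp
next
  case False
  then have "V \<inter> C \<noteq> {} \<longleftrightarrow> W \<inter> C \<noteq> {}"
    using \<open>V \<subseteq> W\<close> by blast
  then show ?thesis
    using monotone[OF V W \<open>V \<subseteq> W\<close>] by simp
qed

lemma subtract_summand:
  assumes U: "openin X U" and C: "irreducible_in X C"
    and summand: "\<And>W. openin X W \<Longrightarrow> \<mu> (W \<inter> U) = c * of_bool (W \<inter> C \<noteq> {})"
  shows "finite_real_valuation X (\<lambda>W. \<mu> W - c * of_bool (W \<inter> C \<noteq> {}))"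
proof
  show "\<mu> {} - c * of_bool ({} \<inter> C \<noteq> {}) = 0"
    using empty_zero by simp
next
  show "\<mu> V - c * of_bool (V \<inter> C \<noteq> {}) \<le> \<mu> W - c * of_bool (W \<inter> C \<noteq> {})"
    if "openin X V" "openin X W" "V \<subseteq> W" for V W
    using monotone_diff_summand[OF U summand that] .
next
  fix V W assume V: "openin X V" and W: "openin X W"
  have "c * of_bool (V \<inter> C \<noteq> {}) + c * of_bool (W \<inter> C \<noteq> {})
      = c * of_bool ((V \<union> W) \<inter> C \<noteq> {}) + c * (of_bool (V \<inter> W \<inter> C \<noteq> {}) :: real)"
    using of_bool_meets_modular[OF C V W] by (metis distrib_left)
  then show "\<mu> V - c * of_bool (V \<inter> C \<noteq> {}) + (\<mu> W - c * of_bool (W \<inter> C \<noteq> {}))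
      = \<mu> (V \<union> W) - c * of_bool ((V \<union> W) \<inter> C \<noteq> {}) + (\<mu> (V \<inter> W) - c * of_bool (V \<inter> W \<inter> C \<noteq> {}))"
    using modular[OF V W] by linarith
next
  show "\<exists>W\<in>D. \<mu> (\<Union>D) - c * of_bool (\<Union>D \<inter> C \<noteq> {}) = \<mu> W - c * of_bool (W \<inter> C \<noteq> {})"
    if "directed_opens X D" for D
    using directed_attained_diff_point_val[OF that] .
next
  have "(\<lambda>W. \<mu> W - c * of_bool (W \<inter> C \<noteq> {})) ` {W. openin X W}
      \<subseteq> \<mu> ` {W. openin X W} \<union> (\<lambda>v. v - c) ` \<mu> ` {W. openin X W}"
  proof (rule image_subsetI)
    fix W assume "W \<in> {W. openin X W}"
    then have "\<mu> W \<in> \<mu> ` {W. openin X W}"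
      by (rule imageI)
    then show "\<mu> W - c * of_bool (W \<inter> C \<noteq> {}) \<in> \<mu> ` {W. openin X W} \<union> (\<lambda>v. v - c) ` \<mu> ` {W. openin X W}"
      by (cases "W \<inter> C = {}") auto
  qed
  then show "finite ((\<lambda>W. \<mu> W - c * of_bool (W \<inter> C \<noteq> {})) ` {W. openin X W})"
    by (rule finite_subset) (simp add: finite_values)
qed

lemma card_values_subtract_summand:
  assumes U: "openin X U" and C: "irreducible_in X C" and "0 < c"
    and summand: "\<And>W. openin X W \<Longrightarrow> \<mu> (W \<inter> U) = c * of_bool (W \<inter> C \<noteq> {})"
  shows "card ((\<lambda>W. \<mu> W - c * of_bool (W \<inter> C \<noteq> {})) ` {W. openin X W}) < card (\<mu> ` {W. openin X W})"
proof -
  let ?S = "\<mu> ` {W. openin X W}"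
  have "topspace X \<inter> U = U" "topspace X \<inter> C = C" "C \<noteq> {}"
    using openin_subset[OF U] C unfolding irreducible_in_def by auto
  then have "\<mu> U = c"
    using summand[of "topspace X"] by simp
  have "(\<lambda>W. \<mu> W - c * of_bool (W \<inter> C \<noteq> {})) ` {W. openin X W} \<subseteq> (\<lambda>v. v - c) ` (?S - {0})"
  proof (rule image_subsetI)
    fix W assume "W \<in> {W. openin X W}"
    then have W: "openin X W" by simp
    show "\<mu> W - c * of_bool (W \<inter> C \<noteq> {}) \<in> (\<lambda>v. v - c) ` (?S - {0})"
    proof (cases "W \<inter> C = {}")
      case True
      have "\<mu> W + \<mu> U = \<mu> (W \<union> U) + \<mu> (W \<inter> U)"
        using modular[OF W U] .
      then have "\<mu> (W \<union> U) = \<mu> W + c"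
        using summand[OF W] True \<open>\<mu> U = c\<close> by simp
      moreover have "\<mu> (W \<union> U) \<in> ?S"
        using W U by (auto simp: openin_Un)
      ultimately show ?thesis
        using True nonneg[OF W] \<open>0 < c\<close> by (intro image_eqI[of _ _ "\<mu> (W \<union> U)"]) auto
    next
      case False
      then have "c \<le> \<mu> W"
        using summand[OF W] monotone[of "W \<inter> U" W] W U by (simp add: openin_Int)
      then show ?thesis
        using False W \<open>0 < c\<close> by (intro image_eqI[of _ _ "\<mu> W"]) auto
    qed
  qed
  then have "card ((\<lambda>W. \<mu> W - c * of_bool (W \<inter> C \<noteq> {})) ` {W. openin X W}) \<le> card (?S - {0})"
    using finite_values by (meson card_image_le card_mono finite_Diff finite_imageI order_trans)
  also have "\<dots> < card ?S"
    using finite_values empty_zero by (intro card_Diff1_less) force+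
  finally show ?thesis .
qed

lemma split_off_point_val:
  assumes "openin X U0" "\<mu> U0 \<noteq> 0"
  obtains C c where "closedin X C" "irreducible_in X C" "0 < c"
    "finite_real_valuation X (\<lambda>W. \<mu> W - c * of_bool (W \<inter> C \<noteq> {}))"
    "card ((\<lambda>W. \<mu> W - c * of_bool (W \<inter> C \<noteq> {})) ` {W. openin X W}) < card (\<mu> ` {W. openin X W})"
proof -
  obtain U where U: "openin X U" "0 < \<mu> U"
    and min: "\<And>W. openin X W \<Longrightarrow> 0 < \<mu> W \<Longrightarrow> \<mu> U \<le> \<mu> W"
    using min_positive_value[OF assms] by blast
  obtain C where "closedin X C"
    and summand: "\<And>W. openin X W \<Longrightarrow> \<mu> (W \<inter> U) = \<mu> U * of_bool (W \<inter> C \<noteq> {})"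
    using min_positive_summand[OF U min] by blast
  moreover have C: "irreducible_in X C"
    using irreducible_summand[OF U closedin_subset[OF \<open>closedin X C\<close>] summand] .
  ultimately show thesis
    using that U(2) subtract_summand[OF U(1) C summand]
      card_values_subtract_summand[OF U(1) C U(2) summand] by blast
qed

end

lemma finite_real_valuation_decomposition:
  assumes "finite_real_valuation X \<mu>"
  shows "\<exists>(n::nat) C a. (\<forall>i<n. closedin X (C i) \<and> irreducible_in X (C i) \<and> 0 < a i) \<and>
           (\<forall>U. openin X U \<longrightarrow> \<mu> U = (\<Sum>i<n. a i * of_bool (U \<inter> C i \<noteq> {})))"
  using assms
proof (induction "card (\<mu> ` {U. openin X U})" arbitrary: \<mu> rule: less_induct)
  case less
  interpret finite_real_valuation X \<mu>
    by (fact less.prems)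
  show ?case
  proof (cases "\<forall>U. openin X U \<longrightarrow> \<mu> U = 0")
    case True
    show ?thesis
      by (rule exI[where x = 0]) (simp add: True)
  next
    case False
    then obtain U0 where "openin X U0" "\<mu> U0 \<noteq> 0"
      by blast
    then obtain C c where C: "closedin X C" "irreducible_in X C" "0 < c"
      and rest: "finite_real_valuation X (\<lambda>W. \<mu> W - c * of_bool (W \<inter> C \<noteq> {}))"
      and smaller: "card ((\<lambda>W. \<mu> W - c * of_bool (W \<inter> C \<noteq> {})) ` {W. openin X W})
                    < card (\<mu> ` {W. openin X W})"
      by (rule split_off_point_val)
    obtain n :: nat and C' a where C': "\<forall>i<n. closedin X (C' i) \<and> irreducible_in X (C' i) \<and> 0 < a i"
      and sum: "\<forall>U. openin X U \<longrightarrow> \<mu> U - c * of_bool (U \<inter> C \<noteq> {}) = (\<Sum>i<n. a i * of_bool (U \<inter> C' i \<noteq> {}))"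
      using less.hyps[OF smaller rest] by blast
    have "\<mu> U = (\<Sum>i<Suc n. (a(n := c)) i * of_bool (U \<inter> (C'(n := C)) i \<noteq> {}))" if "openin X U" for U
      using sum[rule_format, OF that] by auto
    moreover have "\<forall>i<Suc n. closedin X ((C'(n := C)) i) \<and> irreducible_in X ((C'(n := C)) i) \<and> 0 < (a(n := c)) i"
      using C C' by (simp add: less_Suc_eq)
    ultimately show ?thesis
      by (intro exI[where x = "Suc n"] exI[where x = "C'(n := C)"] exI[where x = "a(n := c)"]) blast
  qed
qed

lemma valuation_lt_top:
  assumes "valuation X \<nu>" "bounded_valuation X \<nu>" "openin X U"
  shows "\<nu> U < top"
proof -
  have "\<nu> U \<le> \<nu> (topspace X)"
    using assms(1,3) openin_subset[OF assms(3)] unfolding valuation_def by auto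
  then show ?thesis
    using assms(2) unfolding bounded_valuation_def by simp
qed

lemma finite_real_valuation_enn2real:
  assumes cv: "continuous_valuation X \<nu>" and bd: "bounded_valuation X \<nu>"
    and fin: "finite (\<nu> ` {U. openin X U})"
  shows "finite_real_valuation X (\<lambda>U. enn2real (\<nu> U))"
proof -
  have val: "valuation X \<nu>"
    using cv unfolding continuous_valuation_def by simp
  note lt_top = valuation_lt_top[OF val bd]
  show ?thesis
  proof
    show "enn2real (\<nu> {}) = 0"
      using val unfolding valuation_def by simp
    show "enn2real (\<nu> U) \<le> enn2real (\<nu> V)" if "openin X U" "openin X V" "U \<subseteq> V" for U V
      using val that lt_top[OF that(2)] unfolding valuation_def by (simp add: enn2real_mono)
    show "enn2real (\<nu> U) + enn2real (\<nu> V) = enn2real (\<nu> (U \<union> V)) + enn2real (\<nu> (U \<inter> V))"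
      if "openin X U" "openin X V" for U V
    proof -
      have "\<nu> U + \<nu> V = \<nu> (U \<union> V) + \<nu> (U \<inter> V)"
        using val that unfolding valuation_def by blast
      then have "enn2real (\<nu> U + \<nu> V) = enn2real (\<nu> (U \<union> V) + \<nu> (U \<inter> V))"
        by simp
      then show ?thesis
        using that by (simp add: enn2real_plus lt_top openin_Int openin_Un)
    qed
    show "\<exists>W\<in>D. enn2real (\<nu> (\<Union>D)) = enn2real (\<nu> W)" if D: "directed_opens X D" for D
    proof -
      have "\<nu> ` D \<subseteq> \<nu> ` {U. openin X U}"
        using directed_opens_openin[OF D] by auto
      then have "finite (\<nu> ` D)"
        using fin by (rule finite_subset)
      then have "Sup (\<nu> ` D) \<in> \<nu> ` D"
        using directed_opens_nonempty[OF D] by (intro finite_Sup_in) (auto simp: sup_max max_def)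
      moreover have "\<nu> (\<Union>D) = Sup (\<nu> ` D)"
        using cv D unfolding continuous_valuation_def by blast
      ultimately show ?thesis
        by auto
    qed
    show "finite ((\<lambda>U. enn2real (\<nu> U)) ` {U. openin X U})"
      using finite_imageI[OF fin, of enn2real] by (simp add: image_image)
  qed
qed

lemma sum_point_val_decomposition:
  assumes "continuous_valuation X \<nu>" "bounded_valuation X \<nu>" "finite (\<nu> ` {U. openin X U})"
  shows "\<exists>(n::nat) C (a :: nat \<Rightarrow> ennreal).
           (\<forall>i<n. closedin X (C i) \<and> irreducible_in X (C i) \<and> 0 < a i \<and> a i < \<infinity>) \<and>
           (\<forall>U. openin X U \<longrightarrow> \<nu> U = (\<Sum>i<n. a i * point_val (C i) U))"
proof -
  obtain n :: nat and C a where C: "\<forall>i<n. closedin X (C i) \<and> irreducible_in X (C i) \<and> 0 < a i"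
    and sum: "\<forall>U. openin X U \<longrightarrow> enn2real (\<nu> U) = (\<Sum>i<n. a i * of_bool (U \<inter> C i \<noteq> {}))"
    using finite_real_valuation_decomposition[OF finite_real_valuation_enn2real[OF assms]] by blast
  have "\<nu> U = (\<Sum>i<n. ennreal (a i) * point_val (C i) U)" if U: "openin X U" for U
  proof -
    have "valuation X \<nu>"
      using assms(1) unfolding continuous_valuation_def by simp
    then have "\<nu> U = ennreal (enn2real (\<nu> U))"
      using valuation_lt_top[OF _ assms(2) U] by simp
    also have "\<dots> = ennreal (\<Sum>i<n. a i * of_bool (U \<inter> C i \<noteq> {}))"
      using sum U by simp
    also have "\<dots> = (\<Sum>i<n. ennreal (a i * of_bool (U \<inter> C i \<noteq> {})))"
      using C by (subst sum_ennreal) auto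
    also have "\<dots> = (\<Sum>i<n. ennreal (a i) * point_val (C i) U)"
      by (intro sum.cong) (auto simp: point_val_def)
    finally show ?thesis .
  qed
  then show ?thesis
    using C by (intro exI[where x = n] exI[where x = C] exI[where x = "\<lambda>i. ennreal (a i)"]) auto
qed

lemma valuation_sum_point_val:
  fixes a :: "nat \<Rightarrow> ennreal"
  assumes C: "\<forall>i<n. irreducible_in X (C i)"
    and \<nu>: "\<forall>U. openin X U \<longrightarrow> \<nu> U = (\<Sum>i<n. a i * point_val (C i) U)"
  shows "valuation X \<nu>"
  unfolding valuation_def
proof (intro conjI allI impI)
  show "\<nu> {} = 0"
    using \<nu> by (simp add: point_val_def)
  fix U V
  show "\<nu> U \<le> \<nu> V" if "openin X U \<and> openin X V \<and> U \<subseteq> V"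
    using that \<nu> by (auto intro!: sum_mono mult_left_mono point_val_mono)
  show "\<nu> U + \<nu> V = \<nu> (U \<union> V) + \<nu> (U \<inter> V)" if UV: "openin X U \<and> openin X V"
  proof -
    have "\<nu> U + \<nu> V = (\<Sum>i<n. a i * (point_val (C i) U + point_val (C i) V))"
      using \<nu> UV by (simp add: sum.distrib distrib_left)
    also have "\<dots> = (\<Sum>i<n. a i * (point_val (C i) (U \<union> V) + point_val (C i) (U \<inter> V)))"
    proof (rule sum.cong[OF refl])
      fix i assume "i \<in> {..<n}"
      then have "point_val (C i) U + point_val (C i) V = point_val (C i) (U \<union> V) + point_val (C i) (U \<inter> V)"
        unfolding point_val_eq_of_bool using C UV by (intro of_bool_meets_modular) auto
      then show "a i * (point_val (C i) U + point_val (C i) V)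
          = a i * (point_val (C i) (U \<union> V) + point_val (C i) (U \<inter> V))"
        by simp
    qed
    also have "\<dots> = \<nu> (U \<union> V) + \<nu> (U \<inter> V)"
      using \<nu> UV by (simp add: sum.distrib distrib_left openin_Un openin_Int)
    finally show ?thesis .
  qed
qed

lemma continuous_valuation_sum_point_val:
  fixes a :: "nat \<Rightarrow> ennreal"
  assumes C: "\<forall>i<n. irreducible_in X (C i)"
    and \<nu>: "\<forall>U. openin X U \<longrightarrow> \<nu> U = (\<Sum>i<n. a i * point_val (C i) U)"
  shows "continuous_valuation X \<nu>"
  unfolding continuous_valuation_def
proof (intro conjI allI impI)
  show val: "valuation X \<nu>"
    using valuation_sum_point_val[OF C \<nu>] .
  fix D assume D: "directed_opens X D"
  have "openin X (\<Union>D)"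
    using directed_opens_openin[OF D] by auto
  define I where "I = {i. i < n \<and> \<Union>D \<inter> C i \<noteq> {}}"
  have "\<forall>i\<in>I. \<exists>W\<in>D. W \<inter> C i \<noteq> {}"
    unfolding I_def by blast
  then obtain f where f: "\<And>i. i \<in> I \<Longrightarrow> f i \<in> D \<and> f i \<inter> C i \<noteq> {}"
    by metis
  have "finite (f ` I)" "f ` I \<subseteq> D"
    using f unfolding I_def by auto
  then obtain W where W: "W \<in> D" "\<Union>(f ` I) \<subseteq> W"
    using directed_opens_upper_bound[OF D] by blast
  have "point_val (C i) (\<Union>D) \<le> point_val (C i) W" if "i < n" for i
  proof (cases "i \<in> I")
    case True
    then have "W \<inter> C i \<noteq> {}"
      using f W(2) by blast
    then show ?thesis
      by (simp add: point_val_def)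
  next
    case False
    then show ?thesis
      using that unfolding I_def by (simp add: point_val_def)
  qed
  then have "\<nu> (\<Union>D) \<le> \<nu> W"
    using \<nu> \<open>openin X (\<Union>D)\<close> directed_opens_openin[OF D W(1)]
    by (auto intro!: sum_mono mult_left_mono)
  also have "\<dots> \<le> (SUP U\<in>D. \<nu> U)"
    using W(1) by (rule SUP_upper)
  finally show "\<nu> (\<Union>D) = (SUP U\<in>D. \<nu> U)"
    using val \<open>openin X (\<Union>D)\<close> directed_opens_openin[OF D]
    by (intro antisym SUP_least) (auto simp: valuation_def)
qed

lemma finite_values_sum_point_val:
  fixes n :: nat
  shows "finite ((\<lambda>U. \<Sum>i<n. a i * point_val (C i) U) ` A)"
proof -
  have "(\<Sum>i<n. a i * point_val (C i) U) = sum a {i \<in> {..<n}. U \<inter> C i \<noteq> {}}" for U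
    by (subst sum.inter_filter) (auto simp: point_val_def intro!: sum.cong)
  then have "(\<lambda>U. \<Sum>i<n. a i * point_val (C i) U) ` A \<subseteq> sum a ` Pow {..<n}"
    by auto
  then show ?thesis
    by (rule finite_subset) simp
qed

lemma sum_point_val_continuous_bounded_finite:
  fixes a :: "nat \<Rightarrow> ennreal"
  assumes C: "\<forall>i<n. irreducible_in X (C i) \<and> a i < \<infinity>"
    and \<nu>: "\<forall>U. openin X U \<longrightarrow> \<nu> U = (\<Sum>i<n. a i * point_val (C i) U)"
  shows "continuous_valuation X \<nu> \<and> bounded_valuation X \<nu> \<and> finite (\<nu> ` {U. openin X U})"
proof (intro conjI)
  show "continuous_valuation X \<nu>"
    using C by (intro continuous_valuation_sum_point_val[OF _ \<nu>]) auto
  show "bounded_valuation X \<nu>"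
    using C \<nu> unfolding bounded_valuation_def by (simp add: point_val_def)
  have "\<nu> ` {U. openin X U} = (\<lambda>U. \<Sum>i<n. a i * point_val (C i) U) ` {U. openin X U}"
    using \<nu> by (intro image_cong) auto
  then show "finite (\<nu> ` {U. openin X U})"
    by (simp add: finite_values_sum_point_val)
qed

theorem proposition4p3:
  fixes X :: "'a topology" and \<nu> :: "'a set \<Rightarrow> ennreal"
  shows "(continuous_valuation X \<nu> \<and> bounded_valuation X \<nu> \<and>
          finite (\<nu> ` {U. openin X U}))
     \<longleftrightarrow> (\<exists>(n::nat) (C :: nat \<Rightarrow> 'a set) (a :: nat \<Rightarrow> ennreal).
            (\<forall>i<n. closedin X (C i) \<and> irreducible_in X (C i) \<and> 0 < a i \<and> a i < \<infinity>) \<and>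
            (\<forall>U. openin X U \<longrightarrow> \<nu> U = (\<Sum>i<n. a i * point_val (C i) U)))"
proof (intro iffI; elim conjE exE)
  show "\<exists>(n::nat) (C :: nat \<Rightarrow> 'a set) (a :: nat \<Rightarrow> ennreal).
            (\<forall>i<n. closedin X (C i) \<and> irreducible_in X (C i) \<and> 0 < a i \<and> a i < \<infinity>) \<and>
            (\<forall>U. openin X U \<longrightarrow> \<nu> U = (\<Sum>i<n. a i * point_val (C i) U))"
    if "continuous_valuation X \<nu>" "bounded_valuation X \<nu>" "finite (\<nu> ` {U. openin X U})"
    using that by (rule sum_point_val_decomposition)
next
  fix n :: nat and C a
  assume "\<forall>i<n. closedin X (C i) \<and> irreducible_in X (C i) \<and> 0 < a i \<and> a i < \<infinity>"
    and "\<forall>U. openin X U \<longrightarrow> \<nu> U = (\<Sum>i<n. a i * point_val (C i) U)"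
  then show "continuous_valuation X \<nu> \<and> bounded_valuation X \<nu> \<and> finite (\<nu> ` {U. openin X U})"
    by (intro sum_point_val_continuous_bounded_finite[of n X C a]) auto
qed

end
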